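(* Let $f:(R,\mathfrak{m})\to(S,\mathfrak{n})$ and $g:(S,\mathfrak{n})\to(R,\mathfrak{m})$ be homomorphisms of finite length of Noetherian local rings. Then $g\circ f$ and $f\circ g$ are self-maps of finite length of $R$ and $S$ respectively, and $h_{\mathrm{alg}}(g\circ f,R)=h_{\mathrm{alg}}(f\circ g,S)$.
   Context: A homomorphism $u:(A,\mathfrak{a})\to(B,\mathfrak{b})$ of Noetherian local rings is of finite length if it is local and $u(\mathfrak{a})B$ is $\mathfrak{b}$-primary; its length is $\lambda(u):=\ell_B(B/u(\mathfrak{a})B)$. For a self-map of finite length $\psi$ of a Noetherian local ring $A$, the algebraic entropy is $h_{\mathrm{alg}}(\psi,A):=\lim_{n\to\infty}\frac1n\log\lambda(\psi^n)$ (the limit exists). *)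

theory Defs
  imports "HOL-Algebra.Ring_Divisibility" "HOL-Algebra.RingHom" "HOL-Library.Extended_Nat" Complex_Main
begin

definition local_ring :: "('a, 'm) ring_scheme \<Rightarrow> bool" where
  "local_ring R \<longleftrightarrow> cring R \<and> (\<exists>!m. maximalideal m R)"

definition noeth_local_ring :: "('a, 'm) ring_scheme \<Rightarrow> bool" where
  "noeth_local_ring R \<longleftrightarrow> local_ring R \<and> noetherian_ring R"

definition max_ideal :: "('a, 'm) ring_scheme \<Rightarrow> 'a set" where
  "max_ideal R = (THE m. maximalideal m R)"

definition radical :: "('a, 'm) ring_scheme \<Rightarrow> 'a set \<Rightarrow> 'a set" where
  "radical R I = {x \<in> carrier R. \<exists>n::nat. x [^]\<^bsub>R\<^esub> n \<in> I}"

definition primary_ideal :: "('a, 'm) ring_scheme \<Rightarrow> 'a set \<Rightarrow> bool" where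
  "primary_ideal R Q \<longleftrightarrow> ideal Q R \<and> Q \<noteq> carrier R \<and>
     (\<forall>a \<in> carrier R. \<forall>b \<in> carrier R. a \<otimes>\<^bsub>R\<^esub> b \<in> Q \<longrightarrow> a \<in> Q \<or> (\<exists>n::nat. b [^]\<^bsub>R\<^esub> n \<in> Q))"

definition P_primary :: "('a, 'm) ring_scheme \<Rightarrow> 'a set \<Rightarrow> 'a set \<Rightarrow> bool" where
  "P_primary R P Q \<longleftrightarrow> primary_ideal R Q \<and> radical R Q = P"

text \<open>Length of the R-module R/I: the supremum of the lengths n of strict chains of
  submodules 0 = M_0 < M_1 < ... < M_n = R/I, which correspond exactly to strict chains
  of ideals I = J_0 < J_1 < ... < J_n = R.\<close>
definition ideal_chain :: "('a, 'm) ring_scheme \<Rightarrow> 'a set \<Rightarrow> nat \<Rightarrow> (nat \<Rightarrow> 'a set) \<Rightarrow> bool" where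
  "ideal_chain R I n J \<longleftrightarrow> J 0 = I \<and> J n = carrier R \<and> (\<forall>i\<le>n. ideal (J i) R) \<and>
     (\<forall>i<n. J i \<subset> J (Suc i))"

definition quot_length :: "('a, 'm) ring_scheme \<Rightarrow> 'a set \<Rightarrow> enat" where
  "quot_length R I = Sup {enat n | n. \<exists>J. ideal_chain R I n J}"

definition finite_length_hom ::
  "('a, 'm) ring_scheme \<Rightarrow> ('b, 'n) ring_scheme \<Rightarrow> ('a \<Rightarrow> 'b) \<Rightarrow> bool" where
  "finite_length_hom A B u \<longleftrightarrow> u \<in> ring_hom A B \<and> u ` max_ideal A \<subseteq> max_ideal B \<and>
     P_primary B (max_ideal B) (Idl\<^bsub>B\<^esub> (u ` max_ideal A))"

definition hom_length :: "('a, 'm) ring_scheme \<Rightarrow> ('b, 'n) ring_scheme \<Rightarrow> ('a \<Rightarrow> 'b) \<Rightarrow> enat" where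
  "hom_length A B u = quot_length B (Idl\<^bsub>B\<^esub> (u ` max_ideal A))"

definition h_alg :: "('a, 'm) ring_scheme \<Rightarrow> ('a \<Rightarrow> 'a) \<Rightarrow> real" where
  "h_alg A \<psi> = lim (\<lambda>n. ln (real (the_enat (hom_length A A (\<psi> ^^ n)))) / real n)"

end

(*
  Write lambda(u) for the length of B/u(m_A)B.  These lengths are submultiplicative,
  lambda(v o u) <= lambda(u) * lambda(v): along a composition series of B/u(m_A)B every simple
  factor is (I + xB)/I with m_B x contained in I, so its extension to C is a cyclic module
  annihilated by v(m_B), of length at most lambda(v).  They are also monotone,
  lambda(w) <= lambda(w o u) for local u.  As (g o f)^(n+1) = g o (f o g)^n o f, this gives
  lambda((g o f)^n) <= lambda((g o f)^(n+1)) <= lambda(f) lambda(g) lambda((f o g)^n) and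
  symmetrically, so the logarithms of the two length sequences differ by a bounded amount and
  agree after division by n.  That compositions have finite length rests on the fact that an
  ideal inside the maximal ideal is primary to it exactly when it has finite colength.
*)

theory Submission
  imports Defs
begin

section \<open>Lengths of chains of ideals\<close>

definition ideal_chain_between ::
  "('a, 'm) ring_scheme \<Rightarrow> 'a set \<Rightarrow> 'a set \<Rightarrow> nat \<Rightarrow> (nat \<Rightarrow> 'a set) \<Rightarrow> bool" where
  "ideal_chain_between R A B n C \<longleftrightarrow> C 0 = A \<and> C n = B \<and> (\<forall>i\<le>n. ideal (C i) R) \<and>
     (\<forall>i<n. C i \<subset> C (Suc i))"

text \<open>The length of the module \<open>B/A\<close>, for ideals \<open>A \<subseteq> B\<close>.\<close>
definition chain_length :: "('a, 'm) ring_scheme \<Rightarrow> 'a set \<Rightarrow> 'a set \<Rightarrow> enat" where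
  "chain_length R A B = Sup {enat n | n. \<exists>C. ideal_chain_between R A B n C}"

lemma quot_length_eq_chain_length: "quot_length R I = chain_length R I (carrier R)"
  unfolding quot_length_def chain_length_def ideal_chain_def ideal_chain_between_def by simp

lemma chain_length_ge: "ideal_chain_between R A B n C \<Longrightarrow> enat n \<le> chain_length R A B"
  unfolding chain_length_def by (rule Sup_upper) blast

lemma chain_length_le:
  "(\<And>n C. ideal_chain_between R A B n C \<Longrightarrow> enat n \<le> X) \<Longrightarrow> chain_length R A B \<le> X"
  unfolding chain_length_def by (rule Sup_least) blast

lemma ideal_chain_between_mono:
  assumes "ideal_chain_between R A B n C" "i \<le> j" "j \<le> n"
  shows "C i \<subseteq> C j"
  using assms(2,3)
proof (induction j)
  case (Suc j)
  then have "C j \<subset> C (Suc j)" using assms(1) unfolding ideal_chain_between_def by simp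
  with Suc show ?case by (cases "i = Suc j") auto
qed simp

lemma ideal_chain_between_exists:
  assumes "ideal A R" "ideal B R" "A \<subseteq> B"
  shows "\<exists>n C. ideal_chain_between R A B n C"
proof (cases "A = B")
  case True
  then have "ideal_chain_between R A B 0 (\<lambda>_. A)"
    using assms by (simp add: ideal_chain_between_def)
  then show ?thesis by blast
next
  case False
  then have "ideal_chain_between R A B 1 (\<lambda>i. if i = 0 then A else B)"
    using assms by (auto simp: ideal_chain_between_def)
  then show ?thesis by blast
qed

lemma ideal_chain_between_Cons:
  assumes C: "ideal_chain_between R A B n C" and K: "ideal K R" "K \<subset> A"
  shows "ideal_chain_between R K B (Suc n) (\<lambda>i. if i = 0 then K else C (i - 1))"
  unfolding ideal_chain_between_def
proof (intro conjI allI impI)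
  fix i assume "i < Suc n"
  then show "(if i = 0 then K else C (i - 1)) \<subset> (if Suc i = 0 then K else C (Suc i - 1))"
    using assms by (cases i) (auto simp: ideal_chain_between_def)
qed (use assms in \<open>auto simp: ideal_chain_between_def\<close>)

lemma chain_length_refl: "chain_length R A A = 0"
proof -
  have "n = 0" if "ideal_chain_between R A A n C" for n C
  proof (rule ccontr)
    assume "n \<noteq> 0"
    then have "C 0 \<subset> C 1" "C 1 \<subseteq> C n"
      using that ideal_chain_between_mono[OF that, of 1 n] by (auto simp: ideal_chain_between_def)
    then show False using that by (auto simp: ideal_chain_between_def)
  qed
  then have "chain_length R A A \<le> 0" by (intro chain_length_le) (simp add: zero_enat_def)
  then show ?thesis by simp
qed

lemma chain_length_psubset:
  assumes "ideal K R" "K \<subset> A" and "\<exists>n C. ideal_chain_between R A B n C"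
  shows "eSuc (chain_length R A B) \<le> chain_length R K B"
proof -
  have "eSuc (chain_length R A B) = Sup (eSuc ` {enat n | n. \<exists>C. ideal_chain_between R A B n C})"
    unfolding chain_length_def using assms(3) by (intro eSuc_Sup) blast
  also have "\<dots> \<le> chain_length R K B"
    using chain_length_ge[OF ideal_chain_between_Cons[OF _ assms(1,2)]]
    by (intro Sup_least) (auto simp: eSuc_enat)
  finally show ?thesis .
qed

lemma chain_length_antimono:
  assumes "ideal K R" "K \<subseteq> A"
  shows "chain_length R A B \<le> chain_length R K B"
proof (cases "K = A \<or> \<not> (\<exists>n C. ideal_chain_between R A B n C)")
  case True
  then show ?thesis by (auto simp: chain_length_def bot_enat_def)
next
  case False
  then have "eSuc (chain_length R A B) \<le> chain_length R K B"
    using assms by (intro chain_length_psubset) auto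
  then show ?thesis by (meson ile_eSuc order_trans)
qed

lemma ideal_chain_between_of_mono:
  assumes "\<forall>i\<le>n. ideal (D i) R" "\<forall>i<n. D i \<subseteq> D (Suc i)"
  shows "\<exists>C. ideal_chain_between R (D 0) (D n) (card {i. i < n \<and> D i \<noteq> D (Suc i)}) C"
  using assms
proof (induction n)
  case 0
  then have "ideal_chain_between R (D 0) (D 0) 0 (\<lambda>_. D 0)"
    by (simp add: ideal_chain_between_def)
  then show ?case by auto
next
  case (Suc n)
  let ?steps = "\<lambda>n. {i. i < n \<and> D i \<noteq> D (Suc i)}"
  obtain C where C: "ideal_chain_between R (D 0) (D n) (card (?steps n)) C"
    using Suc by auto
  show ?case
  proof (cases "D n = D (Suc n)")
    case True
    then have "?steps (Suc n) = ?steps n" by (auto simp: less_Suc_eq)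
    with C True show ?thesis by metis
  next
    case False
    then have "?steps (Suc n) = insert n (?steps n)" by (auto simp: less_Suc_eq)
    then have card: "card (?steps (Suc n)) = Suc (card (?steps n))" by simp
    have "D n \<subset> D (Suc n)" using Suc.prems False by auto
    then have "ideal_chain_between R (D 0) (D (Suc n)) (Suc (card (?steps n)))
        (C(Suc (card (?steps n)) := D (Suc n)))"
      using C Suc.prems by (auto simp: ideal_chain_between_def le_Suc_eq less_Suc_eq)
    then show ?thesis unfolding card by blast
  qed
qed

lemma (in ring) Idl_eq_ideal:
  assumes "ideal I R"
  shows "Idl I = I"
proof
  show "Idl I \<subseteq> I" using genideal_minimal[OF assms] by simp
  show "I \<subseteq> Idl I" using genideal_self ideal.Icarr[OF assms] by (simp add: subsetI)
qed

lemma (in ring) set_add_ideals_upper: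
  assumes "ideal I R" "ideal K R"
  shows "I \<subseteq> I <+>\<^bsub>R\<^esub> K" "K \<subseteq> I <+>\<^bsub>R\<^esub> K"
proof -
  have "I \<union> K \<subseteq> Idl (I \<union> K)" using ideal.Icarr[OF assms(1)] ideal.Icarr[OF assms(2)]
    by (intro genideal_self) auto
  then show "I \<subseteq> I <+>\<^bsub>R\<^esub> K" "K \<subseteq> I <+>\<^bsub>R\<^esub> K" unfolding union_genideal[OF assms] by auto
qed

lemma (in ring) set_add_ideals_absorb:
  assumes "ideal I R" "ideal K R" "I \<subseteq> K"
  shows "I <+>\<^bsub>R\<^esub> K = K" "K <+>\<^bsub>R\<^esub> I = K"
proof -
  have "I \<union> K = K" "K \<union> I = K" using assms(3) by auto
  then show "I <+>\<^bsub>R\<^esub> K = K" "K <+>\<^bsub>R\<^esub> I = K"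
    using union_genideal[OF assms(1,2)] union_genideal[OF assms(2,1)] Idl_eq_ideal[OF assms(2)] by simp_all
qed

lemma (in ring) inter_neq_or_set_add_neq:
  assumes I: "ideal I R" and J: "ideal J R" and K: "ideal K R" and IJ: "I \<subset> J"
  shows "I \<inter> K \<noteq> J \<inter> K \<or> I <+>\<^bsub>R\<^esub> K \<noteq> J <+>\<^bsub>R\<^esub> K"
proof (rule ccontr)
  assume "\<not> ?thesis"
  then have inter: "I \<inter> K = J \<inter> K" and add: "I <+>\<^bsub>R\<^esub> K = J <+>\<^bsub>R\<^esub> K" by auto
  interpret I: ideal I R by fact
  interpret J: ideal J R by fact
  have "J \<subseteq> I"
  proof
    fix z assume z: "z \<in> J"
    then have "z \<in> I <+>\<^bsub>R\<^esub> K" using add set_add_ideals_upper(1)[OF J K] by blast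
    then obtain a k where a: "a \<in> I" and k: "k \<in> K" and zak: "z = a \<oplus> k"
      by (auto simp: set_add_def')
    have ak: "a \<in> carrier R" "k \<in> carrier R" using a k I.Icarr ideal.Icarr[OF K] by auto
    then have "k = \<ominus> a \<oplus> z" unfolding zak by (simp add: a_assoc[symmetric] l_neg)
    then have "k \<in> J" using IJ a z by (auto simp: J.a_closed J.a_inv_closed)
    then have "k \<in> I" using inter k by blast
    then show "z \<in> I" unfolding zak using a by (simp add: I.a_closed)
  qed
  then show False using IJ by blast
qed

lemma (in ring) chain_length_subadditive:
  assumes I: "ideal I R" and K: "ideal K R" and J: "ideal J R" and "I \<subseteq> K" "K \<subseteq> J"
  shows "chain_length R I J \<le> chain_length R I K + chain_length R K J"
proof (rule chain_length_le)
  fix n C assume C: "ideal_chain_between R I J n C"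
  then have C0: "C 0 = I" and Cn: "C n = J" and Ci: "\<And>i. i \<le> n \<Longrightarrow> ideal (C i) R"
    and Cs: "\<And>i. i < n \<Longrightarrow> C i \<subset> C (Suc i)" unfolding ideal_chain_between_def by auto
  define D1 where "D1 i = C i \<inter> K" for i
  define D2 where "D2 i = C i <+>\<^bsub>R\<^esub> K" for i
  define S1 where "S1 = {i. i < n \<and> D1 i \<noteq> D1 (Suc i)}"
  define S2 where "S2 = {i. i < n \<and> D2 i \<noteq> D2 (Suc i)}"
  have "\<exists>E. ideal_chain_between R (D1 0) (D1 n) (card S1) E"
    unfolding S1_def using Ci Cs K by (intro ideal_chain_between_of_mono) (auto simp: D1_def i_intersect)
  moreover have "D1 0 = I" "D1 n = K" using C0 Cn \<open>I \<subseteq> K\<close> \<open>K \<subseteq> J\<close> by (auto simp: D1_def)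
  ultimately have 1: "enat (card S1) \<le> chain_length R I K" using chain_length_ge by metis
  have "D2 i \<subseteq> D2 (Suc i)" if "i < n" for i
    using Cs[OF that] unfolding D2_def set_add_def' by blast
  then have "\<exists>E. ideal_chain_between R (D2 0) (D2 n) (card S2) E"
    unfolding S2_def using Ci K by (intro ideal_chain_between_of_mono) (auto simp: D2_def add_ideals)
  moreover have "D2 0 = K" "D2 n = J"
    using C0 Cn set_add_ideals_absorb[OF I K \<open>I \<subseteq> K\<close>] set_add_ideals_absorb[OF K J \<open>K \<subseteq> J\<close>]
    by (simp_all add: D2_def)
  ultimately have 2: "enat (card S2) \<le> chain_length R K J" using chain_length_ge by metis
  have "{..<n} \<subseteq> S1 \<union> S2"
  proof
    fix i assume "i \<in> {..<n}"
    then show "i \<in> S1 \<union> S2"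
      using inter_neq_or_set_add_neq[OF Ci[of i] Ci[of "Suc i"] K Cs[of i]]
      unfolding S1_def S2_def D1_def D2_def by auto
  qed
  moreover have "finite (S1 \<union> S2)" by (simp add: S1_def S2_def)
  ultimately have "card {..<n} \<le> card (S1 \<union> S2)" by (rule card_mono[rotated])
  then have "n \<le> card (S1 \<union> S2)" by simp
  also have "\<dots> \<le> card S1 + card S2" by (rule card_Un_le)
  finally have "enat n \<le> enat (card S1) + enat (card S2)" by simp
  also have "\<dots> \<le> chain_length R I K + chain_length R K J" using 1 2 by (rule add_mono)
  finally show "enat n \<le> chain_length R I K + chain_length R K J" .
qed

lemma (in ring) chain_length_psubset_carrier:
  assumes "ideal K R" "ideal A R" "K \<subset> A"
  shows "eSuc (chain_length R A (carrier R)) \<le> chain_length R K (carrier R)"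
  using assms ideal_chain_between_exists[OF assms(2) oneideal] ideal.Icarr[OF assms(2)]
  by (intro chain_length_psubset) auto

context cring
begin

lemma mem_set_add_PIdl_iff:
  "x \<in> I <+>\<^bsub>R\<^esub> PIdl y \<longleftrightarrow> (\<exists>i\<in>I. \<exists>r\<in>carrier R. x = i \<oplus> r \<otimes> y)"
  unfolding set_add_def' cgenideal_def by auto

lemma set_add_PIdl_upper:
  assumes "ideal I R" "y \<in> carrier R"
  shows "I \<subseteq> I <+>\<^bsub>R\<^esub> PIdl y" "y \<in> I <+>\<^bsub>R\<^esub> PIdl y"
  using set_add_ideals_upper[OF assms(1) cgenideal_ideal[OF assms(2)]] cgenideal_self[OF assms(2)]
  by auto

lemma set_add_PIdl_minimal:
  assumes "ideal J R" "I \<subseteq> J" "y \<in> J"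
  shows "I <+>\<^bsub>R\<^esub> PIdl y \<subseteq> J"
proof
  fix x assume "x \<in> I <+>\<^bsub>R\<^esub> PIdl y"
  then obtain i r where "i \<in> I" "r \<in> carrier R" "x = i \<oplus> r \<otimes> y"
    unfolding mem_set_add_PIdl_iff by blast
  then show "x \<in> J"
    using assms ideal.I_l_closed[OF assms(1)] additive_subgroup.a_closed[OF ideal.axioms(1)[OF assms(1)]]
    by blast
qed

end

definition colon :: "('a, 'm) ring_scheme \<Rightarrow> 'a set \<Rightarrow> 'a \<Rightarrow> 'a set" where
  "colon R I y = {r \<in> carrier R. r \<otimes>\<^bsub>R\<^esub> y \<in> I}"

context cring
begin

lemma colon_ideal:
  assumes I: "ideal I R" and y: "y \<in> carrier R"
  shows "ideal (colon R I y) R"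
proof -
  interpret I: ideal I R by fact
  show ?thesis
  proof (rule idealI[OF ring_axioms])
    show "subgroup (colon R I y) (add_monoid R)"
    proof (rule add.subgroupI)
      show "colon R I y \<subseteq> carrier R" by (auto simp: colon_def)
      have "\<zero> \<in> colon R I y" using y by (simp add: colon_def)
      then show "colon R I y \<noteq> {}" by auto
    next
      fix a assume a: "a \<in> colon R I y"
      then have "\<ominus> a \<otimes> y = \<ominus> (a \<otimes> y)" using y by (simp add: colon_def l_minus)
      then show "\<ominus> a \<in> colon R I y" using a by (simp add: colon_def I.a_inv_closed)
    next
      fix a b assume a: "a \<in> colon R I y" and b: "b \<in> colon R I y"
      then have "(a \<oplus> b) \<otimes> y = a \<otimes> y \<oplus> b \<otimes> y" using y by (simp add: colon_def l_distr)
      then show "a \<oplus> b \<in> colon R I y" using a b by (simp add: colon_def I.a_closed)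
    qed
  next
    fix a x assume a: "a \<in> colon R I y" and x: "x \<in> carrier R"
    then have "x \<otimes> a \<otimes> y = x \<otimes> (a \<otimes> y)" "a \<otimes> x \<otimes> y = x \<otimes> (a \<otimes> y)"
      using y by (simp_all add: colon_def m_assoc m_lcomm)
    then show "x \<otimes> a \<in> colon R I y" "a \<otimes> x \<in> colon R I y"
      using a x by (simp_all add: colon_def I.I_l_closed)
  qed
qed

lemma colon_psubset:
  assumes L: "ideal L R" and C: "ideal C R" and C': "ideal C' R"
    and LC: "L \<subseteq> C" and CC': "C \<subset> C'" and C'L: "C' \<subseteq> L <+>\<^bsub>R\<^esub> PIdl y"
    and y: "y \<in> carrier R"
  shows "colon R C y \<subset> colon R C' y"
proof -
  interpret C: ideal C R by fact
  interpret C': ideal C' R by fact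
  from CC' obtain z where z: "z \<in> C'" "z \<notin> C" by auto
  with C'L have "z \<in> L <+>\<^bsub>R\<^esub> PIdl y" by auto
  then obtain l r where l: "l \<in> L" and r: "r \<in> carrier R" and zlr: "z = l \<oplus> r \<otimes> y"
    unfolding mem_set_add_PIdl_iff by auto
  have lC: "l \<in> C" "l \<in> C'" using l LC CC' by auto
  have "r \<otimes> y = \<ominus> l \<oplus> z" using C.Icarr[OF lC(1)] r y unfolding zlr
    by (simp add: a_assoc[symmetric] l_neg)
  then have "r \<in> colon R C' y" using r z(1) lC(2) by (simp add: colon_def C'.a_closed C'.a_inv_closed)
  moreover have "r \<notin> colon R C y" using z(2) lC(1) zlr by (auto simp: colon_def C.a_closed)
  moreover have "colon R C y \<subseteq> colon R C' y" using CC' unfolding colon_def by auto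
  ultimately show ?thesis by auto
qed

lemma colon_set_add_PIdl:
  assumes "ideal L R" "y \<in> carrier R"
  shows "colon R (L <+>\<^bsub>R\<^esub> PIdl y) y = carrier R"
proof -
  have "r \<otimes> y = \<zero> \<oplus> r \<otimes> y" if "r \<in> carrier R" for r using that assms(2) by simp
  then show ?thesis
    using additive_subgroup.zero_closed[OF ideal.axioms(1)[OF assms(1)]]
    unfolding colon_def mem_set_add_PIdl_iff by blast
qed

lemma chain_length_set_add_PIdl_le:
  assumes L: "ideal L R" and y: "y \<in> carrier R"
  shows "chain_length R L (L <+>\<^bsub>R\<^esub> PIdl y) \<le> chain_length R (colon R L y) (carrier R)"
proof (rule chain_length_le)
  fix n C assume C: "ideal_chain_between R L (L <+>\<^bsub>R\<^esub> PIdl y) n C"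
  then have C0: "C 0 = L" and Cn: "C n = L <+>\<^bsub>R\<^esub> PIdl y" and Ci: "\<And>i. i \<le> n \<Longrightarrow> ideal (C i) R"
    and Cs: "\<And>i. i < n \<Longrightarrow> C i \<subset> C (Suc i)" unfolding ideal_chain_between_def by auto
  have "colon R (C i) y \<subset> colon R (C (Suc i)) y" if i: "i < n" for i
  proof (rule colon_psubset[OF L _ _ _ Cs[OF i] _ y])
    show "ideal (C i) R" "ideal (C (Suc i)) R" using Ci i by simp_all
    show "L \<subseteq> C i" using ideal_chain_between_mono[OF C, of 0 i] C0 i by simp
    show "C (Suc i) \<subseteq> L <+>\<^bsub>R\<^esub> PIdl y" using ideal_chain_between_mono[OF C, of "Suc i" n] Cn i by simp
  qed
  then have "ideal_chain_between R (colon R L y) (carrier R) n (\<lambda>i. colon R (C i) y)"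
    using C0 Cn Ci colon_ideal[OF _ y] colon_set_add_PIdl[OF L y]
    by (simp add: ideal_chain_between_def)
  then show "enat n \<le> chain_length R (colon R L y) (carrier R)" by (rule chain_length_ge)
qed

end

lemma (in cring) exists_colon_psupset:
  assumes I: "ideal I R" and x: "x \<in> carrier R" "x \<notin> I" and k: "x [^] (k::nat) \<in> I"
  obtains y where "y \<in> carrier R" "I \<subset> I <+>\<^bsub>R\<^esub> PIdl y" "I \<subset> colon R I y"
proof -
  interpret I: ideal I R by fact
  obtain j where j: "x [^] j \<notin> I" "x [^] Suc j \<in> I"
    using k
  proof (induction k)
    case 0
    then show ?case using x I.one_imp_carrier by auto
  qed auto
  let ?y = "x [^] j"
  have y: "?y \<in> carrier R" using x by simp
  have "I \<subset> I <+>\<^bsub>R\<^esub> PIdl ?y" using set_add_PIdl_upper[OF I y] j(1) by auto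
  moreover have "I \<subseteq> colon R I ?y" using y by (auto simp: colon_def I.I_r_closed I.Icarr)
  moreover have "x \<in> colon R I ?y" using j(2) x by (simp add: colon_def m_comm)
  ultimately show ?thesis using that y x(2) by auto
qed

text \<open>\<open>J/I\<close> is a simple module.\<close>
definition ideal_covers :: "('a, 'm) ring_scheme \<Rightarrow> 'a set \<Rightarrow> 'a set \<Rightarrow> bool" where
  "ideal_covers R I J \<longleftrightarrow> ideal I R \<and> ideal J R \<and> I \<subset> J \<and>
     (\<forall>K. ideal K R \<longrightarrow> I \<subset> K \<longrightarrow> K \<subseteq> J \<longrightarrow> K = J)"

lemma (in ring) exists_ideal_covers:
  assumes I: "ideal I R" and "I \<noteq> carrier R" and fin: "chain_length R I (carrier R) = enat p"
  shows "\<exists>J. ideal_covers R I J"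
proof -
  let ?S = "\<lambda>J. ideal J R \<and> I \<subset> J"
  let ?len = "\<lambda>J. the_enat (chain_length R J (carrier R))"
  have len: "\<exists>q<p. chain_length R J (carrier R) = enat q" if "?S J" for J
  proof -
    have "eSuc (chain_length R J (carrier R)) \<le> enat p"
      using chain_length_psubset_carrier[OF I] that fin by auto
    then show ?thesis by (cases "chain_length R J (carrier R)") (auto simp: eSuc_enat)
  qed
  have "?S (carrier R)" using assms ideal.Icarr[OF I] oneideal by auto
  moreover have "?len J < p" if "?S J" for J using len[OF that] by auto
  ultimately obtain J where J: "?S J" and max: "\<forall>K. ?S K \<longrightarrow> ?len K \<le> ?len J"
    using ex_has_greatest_nat[of ?S "carrier R" ?len p] by blast
  have "K = J" if K: "ideal K R" "I \<subset> K" "K \<subseteq> J" for K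
  proof (rule ccontr)
    assume "K \<noteq> J"
    with K J have KJ: "K \<subset> J" "ideal J R" by auto
    obtain a where a: "chain_length R J (carrier R) = enat a" using len[OF J] by blast
    obtain b where b: "chain_length R K (carrier R) = enat b" using len[OF conjI[OF K(1,2)]] by blast
    have "eSuc (enat a) \<le> enat b" using chain_length_psubset_carrier[OF K(1) KJ(2,1)] a b by simp
    then have "a < b" by (simp add: eSuc_enat)
    moreover have "b \<le> a" using max[rule_format, OF conjI[OF K(1,2)]] a b by simp
    ultimately show False by simp
  qed
  then show ?thesis using J unfolding ideal_covers_def by (auto simp: I)
qed

lemma (in cring) ideal_covers_eq_set_add_PIdl:
  assumes cov: "ideal_covers R I J" and x: "x \<in> J" "x \<notin> I"
  shows "J = I <+>\<^bsub>R\<^esub> PIdl x"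
proof -
  have I: "ideal I R" and J: "ideal J R" and "I \<subseteq> J" using cov by (auto simp: ideal_covers_def)
  have xc: "x \<in> carrier R" using ideal.Icarr[OF J x(1)] .
  have "I \<subset> I <+>\<^bsub>R\<^esub> PIdl x" using set_add_PIdl_upper[OF I xc] x(2) by auto
  moreover have "I <+>\<^bsub>R\<^esub> PIdl x \<subseteq> J" using set_add_PIdl_minimal[OF J \<open>I \<subseteq> J\<close> x(1)] .
  ultimately show ?thesis using cov add_ideals[OF I cgenideal_ideal[OF xc]] unfolding ideal_covers_def
    by (metis)
qed

context ring_hom_cring
begin

lemma Idl_image_Idl:
  assumes X: "X \<subseteq> carrier R"
  shows "Idl\<^bsub>S\<^esub> (h ` (Idl\<^bsub>R\<^esub> X)) = Idl\<^bsub>S\<^esub> (h ` X)"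
proof
  have hX: "h ` X \<subseteq> carrier S" using X by auto
  have IdlX: "Idl\<^bsub>R\<^esub> X \<subseteq> carrier R" using ideal.Icarr[OF R.genideal_ideal[OF X]] by auto
  have "Idl\<^bsub>R\<^esub> X \<subseteq> {r \<in> carrier R. h r \<in> Idl\<^bsub>S\<^esub> (h ` X)}"
    using X S.genideal_self[OF hX]
    by (intro R.genideal_minimal ring.ideal_vimage S.genideal_ideal hX) auto
  then show "Idl\<^bsub>S\<^esub> (h ` (Idl\<^bsub>R\<^esub> X)) \<subseteq> Idl\<^bsub>S\<^esub> (h ` X)"
    by (intro S.genideal_minimal S.genideal_ideal hX) auto
  have "h ` X \<subseteq> Idl\<^bsub>S\<^esub> (h ` (Idl\<^bsub>R\<^esub> X))"
    using R.genideal_self[OF X] S.genideal_self[of "h ` (Idl\<^bsub>R\<^esub> X)"] IdlX by auto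
  then show "Idl\<^bsub>S\<^esub> (h ` X) \<subseteq> Idl\<^bsub>S\<^esub> (h ` (Idl\<^bsub>R\<^esub> X))"
    using IdlX by (intro S.genideal_minimal S.genideal_ideal) auto
qed

lemma Idl_image_set_add_PIdl:
  assumes I: "ideal I R" and x: "x \<in> carrier R"
  shows "Idl\<^bsub>S\<^esub> (h ` (I <+>\<^bsub>R\<^esub> PIdl\<^bsub>R\<^esub> x)) = Idl\<^bsub>S\<^esub> (h ` I) <+>\<^bsub>S\<^esub> PIdl\<^bsub>S\<^esub> (h x)"
proof
  have hI: "h ` I \<subseteq> carrier S" using ideal.Icarr[OF I] by auto
  have J: "ideal (Idl\<^bsub>S\<^esub> (h ` I) <+>\<^bsub>S\<^esub> PIdl\<^bsub>S\<^esub> (h x)) S"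
    using S.add_ideals S.genideal_ideal[OF hI] S.cgenideal_ideal x by simp
  have "h z \<in> Idl\<^bsub>S\<^esub> (h ` I) <+>\<^bsub>S\<^esub> PIdl\<^bsub>S\<^esub> (h x)" if z: "z \<in> I <+>\<^bsub>R\<^esub> PIdl\<^bsub>R\<^esub> x" for z
  proof -
    obtain i r where i: "i \<in> I" and r: "r \<in> carrier R" and zir: "z = i \<oplus>\<^bsub>R\<^esub> r \<otimes>\<^bsub>R\<^esub> x"
      using z unfolding R.mem_set_add_PIdl_iff by auto
    have "h z = h i \<oplus>\<^bsub>S\<^esub> h r \<otimes>\<^bsub>S\<^esub> h x" using ideal.Icarr[OF I i] r x zir by simp
    moreover have "h i \<in> Idl\<^bsub>S\<^esub> (h ` I)" using S.genideal_self[OF hI] i by auto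
    ultimately show ?thesis using r unfolding S.mem_set_add_PIdl_iff by auto
  qed
  then show "Idl\<^bsub>S\<^esub> (h ` (I <+>\<^bsub>R\<^esub> PIdl\<^bsub>R\<^esub> x)) \<subseteq> Idl\<^bsub>S\<^esub> (h ` I) <+>\<^bsub>S\<^esub> PIdl\<^bsub>S\<^esub> (h x)"
    by (intro S.genideal_minimal[OF J]) auto
  have Ix: "I \<subseteq> I <+>\<^bsub>R\<^esub> PIdl\<^bsub>R\<^esub> x" "x \<in> I <+>\<^bsub>R\<^esub> PIdl\<^bsub>R\<^esub> x" using R.set_add_PIdl_upper[OF I x] by auto
  have Ixc: "h ` (I <+>\<^bsub>R\<^esub> PIdl\<^bsub>R\<^esub> x) \<subseteq> carrier S"
    using ideal.Icarr[OF R.add_ideals[OF I R.cgenideal_ideal[OF x]]] by auto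
  have "Idl\<^bsub>S\<^esub> (h ` I) \<subseteq> Idl\<^bsub>S\<^esub> (h ` (I <+>\<^bsub>R\<^esub> PIdl\<^bsub>R\<^esub> x))"
    using Ix(1) Ixc by (intro S.subset_Idl_subset) auto
  moreover have "h x \<in> Idl\<^bsub>S\<^esub> (h ` (I <+>\<^bsub>R\<^esub> PIdl\<^bsub>R\<^esub> x))" using Ix(2) S.genideal_self[OF Ixc] by auto
  ultimately show "Idl\<^bsub>S\<^esub> (h ` I) <+>\<^bsub>S\<^esub> PIdl\<^bsub>S\<^esub> (h x) \<subseteq> Idl\<^bsub>S\<^esub> (h ` (I <+>\<^bsub>R\<^esub> PIdl\<^bsub>R\<^esub> x))"
    by (intro S.set_add_PIdl_minimal S.genideal_ideal Ixc)
qed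

end

section \<open>Noetherian local rings\<close>

locale noeth_local = cring R + noetherian_ring R for R (structure) +
  fixes m
  assumes maximalideal_m: "maximalideal m R"
    and maximalideal_unique: "maximalideal M R \<Longrightarrow> M = m"

lemma noeth_local_max_ideal:
  assumes "noeth_local_ring R"
  shows "noeth_local R (max_ideal R)"
proof -
  have R: "cring R" "noetherian_ring R" and ex1: "\<exists>!m. maximalideal m R"
    using assms unfolding noeth_local_ring_def local_ring_def by auto
  have "maximalideal (max_ideal R) R" unfolding max_ideal_def using theI'[OF ex1] .
  with ex1 show ?thesis by (intro noeth_local.intro noeth_local_axioms.intro R) auto
qed

context noeth_local
begin

lemma ideal_m: "ideal m R"
  using maximalideal_m by (rule maximalideal.axioms(1))

lemma m_subset_carrier: "m \<subseteq> carrier R"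
  using ideal.Icarr[OF ideal_m] by auto

lemma wf_ideal_psupset: "wf {(J, I). ideal I R \<and> ideal J R \<and> I \<subset> J}"
proof (rule wf_iff_no_infinite_down_chain[THEN iffD2], rule notI)
  assume "\<exists>f. \<forall>i. (f (Suc i), f i) \<in> {(J, I). ideal I R \<and> ideal J R \<and> I \<subset> J}"
  then obtain f where "\<forall>i. ideal (f i) R \<and> f i \<subset> f (Suc i)" by blast
  then have f: "\<And>i. ideal (f i) R" "\<And>i. f i \<subset> f (Suc i)" by auto
  then have "mono f" by (intro mono_iff_le_Suc[THEN iffD2]) auto
  have "subset.chain {I. ideal I R} (range f)"
    unfolding subset_chain_def
  proof (intro conjI ballI)
    show "range f \<subseteq> {I. ideal I R}" using f(1) by auto
    fix x y assume "x \<in> range f" "y \<in> range f"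
    then obtain i j where "x = f i" "y = f j" by auto
    then show "x \<subseteq> y \<or> y \<subseteq> x"
      using monoD[OF \<open>mono f\<close>, of i j] monoD[OF \<open>mono f\<close>, of j i] by (cases "i \<le> j") auto
  qed
  then have "\<Union>(range f) \<in> range f" by (intro ideal_chain_is_trivial) auto
  then obtain k where "\<Union>(range f) = f k" by auto
  then have "f (Suc k) \<subseteq> f k" by auto
  then show False using f(2)[of k] by auto
qed

lemma ideal_subset_m:
  assumes I: "ideal I R" and "I \<noteq> carrier R"
  shows "I \<subseteq> m"
proof -
  let ?S = "{J. ideal J R \<and> J \<noteq> carrier R \<and> I \<subseteq> J}"
  obtain J where J: "J \<in> ?S"
    and max: "\<And>J'. (J', J) \<in> {(J, I). ideal I R \<and> ideal J R \<and> I \<subset> J} \<Longrightarrow> J' \<notin> ?S"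
    using wfE_min[OF wf_ideal_psupset, of I ?S] assms by auto
  have "maximalideal J R"
  proof (rule maximalidealI)
    show "ideal J R" "carrier R \<noteq> J" using J by auto
    fix J' assume "ideal J' R" "J \<subseteq> J'" "J' \<subseteq> carrier R"
    then show "J' = J \<or> J' = carrier R" using J max[of J'] by auto
  qed
  then show ?thesis using J maximalideal_unique by auto
qed

lemma m_eq_nonunits: "m = carrier R - Units R"
proof
  have "u \<notin> m" if "u \<in> Units R" for u
  proof
    assume "u \<in> m"
    then have "inv u \<otimes> u \<in> m" using ideal.I_l_closed[OF ideal_m _ Units_inv_closed[OF that]] by simp
    then have "\<one> \<in> m" using Units_l_inv[OF that] by simp
    then show False using ideal.one_imp_carrier[OF ideal_m] maximalideal.I_notcarr[OF maximalideal_m] by simp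
  qed
  then show "m \<subseteq> carrier R - Units R" using m_subset_carrier by auto
  have "x \<in> Units R" if x: "x \<in> carrier R" "x \<notin> m" for x
  proof -
    have "PIdl x = carrier R"
      using ideal_subset_m[OF cgenideal_ideal] cgenideal_self x by auto
    then obtain r where "r \<in> carrier R" "\<one> = r \<otimes> x" unfolding cgenideal_def by auto
    then show ?thesis using x by (auto simp: Units_def m_comm)
  qed
  then show "carrier R - Units R \<subseteq> m" by auto
qed

lemma nakayama_mem:
  assumes J: "ideal J R" and a: "a \<in> carrier R" and t: "t \<in> m" and c: "c \<in> J"
    and eq: "a = c \<oplus> a \<otimes> t"
  shows "a \<in> J"
proof -
  have tc: "t \<in> carrier R" using t m_subset_carrier by auto
  have cc: "c \<in> carrier R" using c ideal.Icarr[OF J] by auto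
  have "\<one> \<ominus> t \<notin> m"
  proof
    assume "\<one> \<ominus> t \<in> m"
    then have "(\<one> \<ominus> t) \<oplus> t \<in> m" using t additive_subgroup.a_closed[OF ideal.axioms(1)[OF ideal_m]] by auto
    then show False using tc m_eq_nonunits by (simp add: a_minus_def a_assoc l_neg)
  qed
  then have u: "\<one> \<ominus> t \<in> Units R" using tc m_eq_nonunits by auto
  have "a \<otimes> (\<one> \<ominus> t) = c"
  proof -
    have "a \<otimes> (\<one> \<ominus> t) = a \<ominus> a \<otimes> t"
      using a tc by (simp add: a_minus_def r_distr r_minus)
    also have "\<dots> = (c \<oplus> a \<otimes> t) \<ominus> a \<otimes> t" by (simp only: eq[symmetric])
    also have "\<dots> = c" using a tc cc by (simp add: a_minus_def a_assoc r_neg)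
    finally show ?thesis .
  qed
  then have "a = c \<otimes> inv (\<one> \<ominus> t)" using a u by (auto simp: m_assoc Units_closed)
  then show ?thesis using ideal.I_r_closed[OF J c Units_inv_closed[OF u]] by simp
qed

lemma chain_length_m: "chain_length R m (carrier R) \<le> 1"
proof (rule chain_length_le)
  fix n C assume C: "ideal_chain_between R m (carrier R) n C"
  show "enat n \<le> 1"
  proof (rule ccontr)
    assume "\<not> enat n \<le> 1"
    then have n: "2 \<le> n" by (simp add: one_enat_def)
    have "C 0 \<subset> C 1" "C 1 \<subset> C 2" "ideal (C 1) R" "C 0 = m"
      using C n unfolding ideal_chain_between_def by (auto simp: numeral_2_eq_2)
    moreover have "C 2 \<subseteq> carrier R" using ideal_chain_between_mono[OF C, of 2 n] C n
      by (simp add: ideal_chain_between_def)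
    ultimately show False using maximalideal.I_maximal[OF maximalideal_m, of "C 1"] by auto
  qed
qed

lemma chain_length_finite_of_radical:
  assumes Q: "ideal Q R" and rad: "\<And>x. x \<in> m \<Longrightarrow> \<exists>k::nat. x [^] k \<in> Q"
  shows "chain_length R Q (carrier R) < \<infinity>"
proof -
  have "chain_length R I (carrier R) < \<infinity>" if "ideal I R" "Q \<subseteq> I" for I
    using that
  proof (induction I rule: wf_induct_rule[OF wf_ideal_psupset])
    case (1 I)
    then have I: "ideal I R" and QI: "Q \<subseteq> I" by auto
    have IH: "chain_length R J (carrier R) < \<infinity>" if "ideal J R" "I \<subset> J" for J
      using 1 that by auto
    consider "I = carrier R" | "I = m" | x where "x \<in> m" "x \<notin> I"
      using ideal_subset_m[OF I] by auto
    then show ?case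
    proof cases
      case 1
      then show ?thesis by (simp add: chain_length_refl)
    next
      case 2
      then show ?thesis using chain_length_m by (cases "chain_length R m (carrier R)") auto
    next
      case 3
      then obtain k :: nat where "x [^] k \<in> I" using rad[OF \<open>x \<in> m\<close>] QI by blast
      then obtain y where y: "y \<in> carrier R" and
        add: "I \<subset> I <+>\<^bsub>R\<^esub> PIdl y" and col: "I \<subset> colon R I y"
        using exists_colon_psupset[OF I _ \<open>x \<notin> I\<close>] 3 m_subset_carrier by blast
      have Iy: "ideal (I <+>\<^bsub>R\<^esub> PIdl y) R" using add_ideals[OF I cgenideal_ideal[OF y]] .
      have "chain_length R I (carrier R) \<le>
          chain_length R I (I <+>\<^bsub>R\<^esub> PIdl y) + chain_length R (I <+>\<^bsub>R\<^esub> PIdl y) (carrier R)"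
        using add by (intro chain_length_subadditive I Iy oneideal) (auto dest: ideal.Icarr[OF Iy])
      also have "\<dots> \<le> chain_length R (colon R I y) (carrier R) + chain_length R (I <+>\<^bsub>R\<^esub> PIdl y) (carrier R)"
        using chain_length_set_add_PIdl_le[OF I y] by (rule add_right_mono)
      also have "\<dots> < \<infinity>"
        using IH[OF colon_ideal[OF I y] col] IH[OF Iy add] by (simp add: plus_eq_infty_iff_enat)
      finally show ?thesis .
    qed
  qed
  then show ?thesis using Q by auto
qed

lemma set_add_PIdl_pow_psubset:
  assumes Q: "ideal Q R" and x: "x \<in> m" and notin: "x [^] k \<notin> Q"
  shows "Q <+>\<^bsub>R\<^esub> PIdl (x [^] Suc k) \<subset> Q <+>\<^bsub>R\<^esub> PIdl (x [^] (k::nat))"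
proof
  have xc: "x \<in> carrier R" using x m_subset_carrier by auto
  have upper: "Q \<subseteq> Q <+>\<^bsub>R\<^esub> PIdl (x [^] k)" "x [^] k \<in> Q <+>\<^bsub>R\<^esub> PIdl (x [^] k)"
    using set_add_PIdl_upper[OF Q] xc by auto
  have "x [^] Suc k \<in> Q <+>\<^bsub>R\<^esub> PIdl (x [^] k)"
    using ideal.I_r_closed[OF add_ideals[OF Q cgenideal_ideal] upper(2) xc] xc by simp
  then show "Q <+>\<^bsub>R\<^esub> PIdl (x [^] Suc k) \<subseteq> Q <+>\<^bsub>R\<^esub> PIdl (x [^] k)"
    using set_add_PIdl_minimal[OF add_ideals[OF Q cgenideal_ideal] upper(1)] xc by simp
  show "Q <+>\<^bsub>R\<^esub> PIdl (x [^] Suc k) \<noteq> Q <+>\<^bsub>R\<^esub> PIdl (x [^] k)"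
  proof
    assume eq: "Q <+>\<^bsub>R\<^esub> PIdl (x [^] Suc k) = Q <+>\<^bsub>R\<^esub> PIdl (x [^] k)"
    obtain q r where q: "q \<in> Q" and r: "r \<in> carrier R" and qr: "x [^] k = q \<oplus> r \<otimes> x [^] Suc k"
      using upper(2) unfolding eq[symmetric] mem_set_add_PIdl_iff by auto
    have e: "r \<otimes> x [^] Suc k = x [^] k \<otimes> (r \<otimes> x)" using r xc by (simp add: m_ac)
    from qr have "x [^] k = q \<oplus> x [^] k \<otimes> (r \<otimes> x)" unfolding e .
    then have "x [^] k \<in> Q"
      by (rule nakayama_mem[OF Q nat_pow_closed[OF xc] ideal.I_l_closed[OF ideal_m x r] q])
    with notin show False by simp
  qed
qed

lemma pow_mem_of_chain_length_finite:
  assumes Q: "ideal Q R" and fin: "chain_length R Q (carrier R) < \<infinity>" and x: "x \<in> m"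
  shows "\<exists>k::nat. x [^] k \<in> Q"
proof (rule ccontr)
  assume none: "\<nexists>k::nat. x [^] k \<in> Q"
  define G where "G k = Q <+>\<^bsub>R\<^esub> PIdl (x [^] (k::nat))" for k
  have xc: "x \<in> carrier R" using x m_subset_carrier by auto
  have psub: "G (Suc k) \<subset> G k" for k
    unfolding G_def by (rule set_add_PIdl_pow_psubset[OF Q x]) (use none in auto)
  have ideals: "ideal (G k) R" for k
    unfolding G_def using add_ideals[OF Q cgenideal_ideal] xc by simp
  have QG: "Q \<subseteq> G k" for k unfolding G_def by (rule set_add_PIdl_upper(1)[OF Q nat_pow_closed[OF xc]])
  have "\<one> \<in> G 0" unfolding G_def using set_add_PIdl_upper(2)[OF Q one_closed] by simp
  then have "G 0 = carrier R" by (rule ideal.one_imp_carrier[OF ideals])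
  then have chain: "ideal_chain_between R (G N) (carrier R) N (\<lambda>i. G (N - i))" for N
    unfolding ideal_chain_between_def
  proof (intro conjI allI impI)
    fix i assume "i < N"
    then have "N - i = Suc (N - Suc i)" by simp
    then show "G (N - i) \<subset> G (N - Suc i)" using psub by simp
  qed (use ideals in auto)
  have "enat N \<le> chain_length R Q (carrier R)" for N
    using chain_length_ge[OF chain] chain_length_antimono[OF Q QG] by (rule order_trans)
  moreover obtain p where "chain_length R Q (carrier R) = enat p" using fin by auto
  ultimately show False by (metis enat_ord_simps(1) lessI not_le)
qed

lemma P_primary_of_chain_length_finite:
  assumes Q: "ideal Q R" and Qm: "Q \<subseteq> m" and fin: "chain_length R Q (carrier R) < \<infinity>"
  shows "P_primary R m Q"
  unfolding P_primary_def primary_ideal_def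
proof (intro conjI ballI impI Q)
  show "Q \<noteq> carrier R" using Qm m_eq_nonunits by auto
  show "radical R Q = m"
  proof
    show "m \<subseteq> radical R Q"
      using pow_mem_of_chain_length_finite[OF Q fin] m_subset_carrier unfolding radical_def by auto
    have "x \<in> m" if "x \<in> carrier R" "x [^] (n::nat) \<in> Q" for x n
      using that Qm m_eq_nonunits Units_pow_closed[of x n] by auto
    then show "radical R Q \<subseteq> m" unfolding radical_def by auto
  qed
  fix a b assume a: "a \<in> carrier R" and b: "b \<in> carrier R" and ab: "a \<otimes> b \<in> Q"
  show "a \<in> Q \<or> (\<exists>n::nat. b [^] n \<in> Q)"
  proof (cases "b \<in> m")
    case True
    then show ?thesis using pow_mem_of_chain_length_finite[OF Q fin] by auto
  next
    case False
    then have u: "b \<in> Units R" using b m_eq_nonunits by auto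
    have "a = (a \<otimes> b) \<otimes> inv b" using a u by (auto simp: m_assoc Units_closed)
    then show ?thesis using ideal.I_r_closed[OF Q ab Units_inv_closed[OF u]] by simp
  qed
qed

lemma ideal_covers_mult_m:
  assumes cov: "ideal_covers R I J" and x: "x \<in> J" and t: "t \<in> m"
  shows "t \<otimes> x \<in> I"
proof (rule ccontr)
  assume tx: "t \<otimes> x \<notin> I"
  have I: "ideal I R" and J: "ideal J R" using cov by (auto simp: ideal_covers_def)
  have xc: "x \<in> carrier R" using ideal.Icarr[OF J x] .
  have tc: "t \<in> carrier R" using t m_subset_carrier by auto
  have "t \<otimes> x \<in> J" using ideal.I_l_closed[OF J x tc] .
  then have "J = I <+>\<^bsub>R\<^esub> PIdl (t \<otimes> x)" using ideal_covers_eq_set_add_PIdl[OF cov] tx by auto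
  then have "x \<in> I <+>\<^bsub>R\<^esub> PIdl (t \<otimes> x)" using x by simp
  then obtain i r where i: "i \<in> I" and r: "r \<in> carrier R" and irx: "x = i \<oplus> r \<otimes> (t \<otimes> x)"
    unfolding mem_set_add_PIdl_iff by blast
  have e: "r \<otimes> (t \<otimes> x) = x \<otimes> (r \<otimes> t)" using r tc xc by (simp add: m_ac)
  from irx have "x = i \<oplus> x \<otimes> (r \<otimes> t)" unfolding e .
  then have "x \<in> I" by (rule nakayama_mem[OF I xc ideal.I_l_closed[OF ideal_m t r] i])
  then have "x \<otimes> t \<in> I" using ideal.I_r_closed[OF I _ tc] by simp
  then show False using tx m_comm[OF tc xc] by simp
qed

end

lemma chain_length_Idl_image_covers:
  assumes B: "noeth_local B mB" and v: "ring_hom_cring B C v" and cov: "ideal_covers B I J"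
  shows "chain_length C (Idl\<^bsub>C\<^esub> (v ` I)) (Idl\<^bsub>C\<^esub> (v ` J))
    \<le> chain_length C (Idl\<^bsub>C\<^esub> (v ` mB)) (carrier C)"
proof -
  interpret B: noeth_local B mB by fact
  interpret v: ring_hom_cring B C v by fact
  have I: "ideal I B" and J: "ideal J B" using cov by (auto simp: ideal_covers_def)
  obtain x where x: "x \<in> J" "x \<notin> I" using cov by (auto simp: ideal_covers_def)
  have xc: "x \<in> carrier B" using ideal.Icarr[OF J x(1)] .
  have vI: "v ` I \<subseteq> carrier C" using ideal.Icarr[OF I] by auto
  let ?L = "Idl\<^bsub>C\<^esub> (v ` I)"
  have L: "ideal ?L C" using v.S.genideal_ideal[OF vI] .
  have "Idl\<^bsub>C\<^esub> (v ` J) = ?L <+>\<^bsub>C\<^esub> PIdl\<^bsub>C\<^esub> (v x)"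
    using B.ideal_covers_eq_set_add_PIdl[OF cov x] v.Idl_image_set_add_PIdl[OF I xc] by simp
  then have "chain_length C ?L (Idl\<^bsub>C\<^esub> (v ` J)) \<le> chain_length C (colon C ?L (v x)) (carrier C)"
    using v.S.chain_length_set_add_PIdl_le[OF L] xc by simp
  also have "\<dots> \<le> chain_length C (Idl\<^bsub>C\<^esub> (v ` mB)) (carrier C)"
  proof (rule chain_length_antimono)
    show "ideal (Idl\<^bsub>C\<^esub> (v ` mB)) C" using B.m_subset_carrier by (intro v.S.genideal_ideal) auto
    have "v b \<in> colon C ?L (v x)" if b: "b \<in> mB" for b
    proof -
      have bc: "b \<in> carrier B" using b B.m_subset_carrier by auto
      have "v (b \<otimes>\<^bsub>B\<^esub> x) \<in> ?L"
        using B.ideal_covers_mult_m[OF cov x(1) b] v.S.genideal_self[OF vI] by auto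
      then show ?thesis using bc xc by (simp add: colon_def)
    qed
    then show "Idl\<^bsub>C\<^esub> (v ` mB) \<subseteq> colon C ?L (v x)"
      using v.S.colon_ideal[OF L] xc by (intro v.S.genideal_minimal) auto
  qed
  finally show ?thesis .
qed

text \<open>Induction on the length of \<open>B/I\<close>, splitting off one simple factor \<open>J/I\<close> at a time.\<close>
lemma chain_length_Idl_image_le:
  assumes B: "noeth_local B mB" and v: "ring_hom_cring B C v"
    and I: "ideal I B" and p: "chain_length B I (carrier B) = enat p"
  shows "chain_length C (Idl\<^bsub>C\<^esub> (v ` I)) (carrier C)
    \<le> enat p * chain_length C (Idl\<^bsub>C\<^esub> (v ` mB)) (carrier C)"
  using I p
proof (induction p arbitrary: I rule: less_induct)
  case (less p)
  interpret B: noeth_local B mB by fact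
  interpret v: ring_hom_cring B C v by fact
  let ?q = "chain_length C (Idl\<^bsub>C\<^esub> (v ` mB)) (carrier C)"
  have image: "v ` K \<subseteq> carrier C" "ideal (Idl\<^bsub>C\<^esub> (v ` K)) C" if "ideal K B" for K
    using ideal.Icarr[OF that] v.S.genideal_ideal[of "v ` K"] by auto
  show ?case
  proof (cases "I = carrier B")
    case True
    then have "\<one>\<^bsub>C\<^esub> \<in> Idl\<^bsub>C\<^esub> (v ` I)" using v.S.genideal_self[OF image(1)[OF less.prems(1)]] by force
    then have "Idl\<^bsub>C\<^esub> (v ` I) = carrier C" by (rule ideal.one_imp_carrier[OF image(2)[OF less.prems(1)]])
    then show ?thesis by (simp add: chain_length_refl)
  next
    case False
    obtain J where cov: "ideal_covers B I J"
      using B.exists_ideal_covers[OF less.prems(1) False less.prems(2)] by blast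
    then have J: "ideal J B" and IJ: "I \<subset> J" by (auto simp: ideal_covers_def)
    have "eSuc (chain_length B J (carrier B)) \<le> enat p"
      using B.chain_length_psubset_carrier[OF less.prems(1) J IJ] less.prems(2) by simp
    then obtain p' where p': "chain_length B J (carrier B) = enat p'" "p' < p"
      by (cases "chain_length B J (carrier B)") (auto simp: eSuc_enat)
    have "Idl\<^bsub>C\<^esub> (v ` I) \<subseteq> Idl\<^bsub>C\<^esub> (v ` J)"
      using IJ image(1)[OF J] by (intro v.S.subset_Idl_subset) auto
    then have "chain_length C (Idl\<^bsub>C\<^esub> (v ` I)) (carrier C)
        \<le> chain_length C (Idl\<^bsub>C\<^esub> (v ` I)) (Idl\<^bsub>C\<^esub> (v ` J)) + chain_length C (Idl\<^bsub>C\<^esub> (v ` J)) (carrier C)"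
      using image[OF less.prems(1)] image[OF J] ideal.Icarr[OF image(2)[OF J]]
      by (intro v.S.chain_length_subadditive v.S.oneideal) auto
    also have "\<dots> \<le> ?q + enat p' * ?q"
      using chain_length_Idl_image_covers[OF B v cov] less.IH[OF p'(2) J p'(1)] by (rule add_mono)
    also have "\<dots> = enat (Suc p') * ?q" by (simp add: eSuc_enat[symmetric] mult_eSuc)
    also have "\<dots> \<le> enat p * ?q" using p'(2) by (intro mult_right_mono) auto
    finally show ?thesis .
  qed
qed

section \<open>Homomorphisms of finite length\<close>

lemma hom_length_eq_chain_length:
  "hom_length A B u = chain_length B (Idl\<^bsub>B\<^esub> (u ` max_ideal A)) (carrier B)"
  unfolding hom_length_def quot_length_eq_chain_length ..

lemma finite_length_hom_finite:
  assumes B: "noeth_local_ring B" and u: "finite_length_hom A B u"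
  shows "hom_length A B u < \<infinity>"
proof -
  interpret B: noeth_local B "max_ideal B" using noeth_local_max_ideal[OF B] .
  let ?Q = "Idl\<^bsub>B\<^esub> (u ` max_ideal A)"
  have Q: "ideal ?Q B" and rad: "radical B ?Q = max_ideal B"
    using u unfolding finite_length_hom_def P_primary_def primary_ideal_def by auto
  have "\<exists>k::nat. x [^]\<^bsub>B\<^esub> k \<in> ?Q" if "x \<in> max_ideal B" for x
    using that rad unfolding radical_def by auto
  with Q show ?thesis
    unfolding hom_length_eq_chain_length by (rule B.chain_length_finite_of_radical)
qed

lemma one_le_hom_length:
  assumes B: "noeth_local_ring B" and u: "u ` max_ideal A \<subseteq> max_ideal B"
  shows "1 \<le> hom_length A B u"
proof -
  interpret B: noeth_local B "max_ideal B" using noeth_local_max_ideal[OF B] .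
  let ?Q = "Idl\<^bsub>B\<^esub> (u ` max_ideal A)"
  have Q: "ideal ?Q B" using u B.m_subset_carrier by (intro B.genideal_ideal) auto
  have "?Q \<subseteq> max_ideal B" using B.genideal_minimal[OF B.ideal_m u] .
  then have "?Q \<subset> carrier B" using B.m_eq_nonunits by auto
  then have "eSuc (chain_length B (carrier B) (carrier B)) \<le> chain_length B ?Q (carrier B)"
    using B.chain_length_psubset_carrier[OF Q B.oneideal] by simp
  then show ?thesis unfolding hom_length_eq_chain_length by (simp add: chain_length_refl one_eSuc)
qed

lemma hom_length_comp_le:
  assumes B: "noeth_local_ring B" and C: "cring C"
    and u: "finite_length_hom A B u" and v: "v \<in> ring_hom B C"
  shows "hom_length A C (v \<circ> u) \<le> hom_length A B u * hom_length B C v"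
proof -
  interpret B: noeth_local B "max_ideal B" using noeth_local_max_ideal[OF B] .
  interpret v: ring_hom_cring B C v
    using B.cring_axioms C v by (intro ring_hom_cring.intro ring_hom_cring_axioms.intro)
  have uA: "u ` max_ideal A \<subseteq> carrier B"
    using u B.m_subset_carrier unfolding finite_length_hom_def by auto
  obtain p where p: "hom_length A B u = enat p" using finite_length_hom_finite[OF B u] by auto
  have "hom_length A C (v \<circ> u) = chain_length C (Idl\<^bsub>C\<^esub> (v ` (Idl\<^bsub>B\<^esub> (u ` max_ideal A)))) (carrier C)"
    unfolding hom_length_eq_chain_length v.Idl_image_Idl[OF uA] by (simp add: image_comp)
  also have "\<dots> \<le> enat p * hom_length B C v"
    using p B.genideal_ideal[OF uA] unfolding hom_length_eq_chain_length
    by (intro chain_length_Idl_image_le[OF noeth_local_max_ideal[OF B] v.ring_hom_cring_axioms]) auto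
  finally show ?thesis using p by simp
qed

lemma hom_length_comp_ge:
  assumes B: "noeth_local_ring B" and C: "cring C" and v: "v \<in> ring_hom B C"
    and u: "u ` max_ideal A \<subseteq> max_ideal B"
  shows "hom_length B C v \<le> hom_length A C (v \<circ> u)"
proof -
  interpret B: noeth_local B "max_ideal B" using noeth_local_max_ideal[OF B] .
  interpret C: cring C by fact
  have vB: "v ` max_ideal B \<subseteq> carrier C" using B.m_subset_carrier ring_hom_closed[OF v] by auto
  have "(v \<circ> u) ` max_ideal A \<subseteq> Idl\<^bsub>C\<^esub> (v ` max_ideal B)"
    using u C.genideal_self[OF vB] by auto
  then have "Idl\<^bsub>C\<^esub> ((v \<circ> u) ` max_ideal A) \<subseteq> Idl\<^bsub>C\<^esub> (v ` max_ideal B)"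
    by (intro C.genideal_minimal C.genideal_ideal vB)
  moreover have "ideal (Idl\<^bsub>C\<^esub> ((v \<circ> u) ` max_ideal A)) C"
    using u vB by (intro C.genideal_ideal) auto
  ultimately show ?thesis unfolding hom_length_eq_chain_length by (rule chain_length_antimono[rotated])
qed

lemma finite_length_hom_comp:
  assumes B: "noeth_local_ring B" and C: "noeth_local_ring C"
    and u: "finite_length_hom A B u" and v: "finite_length_hom B C v"
  shows "finite_length_hom A C (v \<circ> u)"
proof -
  interpret C: noeth_local C "max_ideal C" using noeth_local_max_ideal[OF C] .
  have hom: "v \<circ> u \<in> ring_hom A C"
    using u v ring_hom_trans unfolding finite_length_hom_def by auto
  have "(v \<circ> u) ` max_ideal A \<subseteq> v ` max_ideal B"
    using u unfolding finite_length_hom_def by (auto simp: image_comp[symmetric])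
  then have local: "(v \<circ> u) ` max_ideal A \<subseteq> max_ideal C"
    using v unfolding finite_length_hom_def by auto
  have "hom_length A C (v \<circ> u) \<le> hom_length A B u * hom_length B C v"
    using v by (intro hom_length_comp_le[OF B C.cring_axioms u]) (simp add: finite_length_hom_def)
  also have "\<dots> < \<infinity>"
    using finite_length_hom_finite[OF B u] finite_length_hom_finite[OF C v] by (auto simp: less_infinityE)
  finally have "chain_length C (Idl\<^bsub>C\<^esub> ((v \<circ> u) ` max_ideal A)) (carrier C) < \<infinity>"
    unfolding hom_length_eq_chain_length .
  then have "P_primary C (max_ideal C) (Idl\<^bsub>C\<^esub> ((v \<circ> u) ` max_ideal A))"
    using local C.m_subset_carrier
    by (intro C.P_primary_of_chain_length_finite C.genideal_ideal C.genideal_minimal[OF C.ideal_m]) auto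
  then show ?thesis using hom local unfolding finite_length_hom_def by auto
qed

lemma finite_length_hom_id:
  assumes A: "noeth_local_ring A"
  shows "finite_length_hom A A id"
proof -
  interpret A: noeth_local A "max_ideal A" using noeth_local_max_ideal[OF A] .
  have "chain_length A (max_ideal A) (carrier A) < \<infinity>"
    using A.chain_length_m by (cases "chain_length A (max_ideal A) (carrier A)") auto
  then have "P_primary A (max_ideal A) (max_ideal A)"
    by (intro A.P_primary_of_chain_length_finite A.ideal_m) auto
  then show ?thesis
    unfolding finite_length_hom_def using A.Idl_eq_ideal[OF A.ideal_m] by (simp add: id_ring_hom)
qed

lemma finite_length_hom_funpow:
  assumes A: "noeth_local_ring A" and \<psi>: "finite_length_hom A A \<psi>"
  shows "finite_length_hom A A (\<psi> ^^ n)"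
proof (induction n)
  case 0
  show ?case unfolding funpow.simps(1) by (rule finite_length_hom_id[OF A])
next
  case (Suc n)
  then show ?case unfolding funpow.simps(2) by (rule finite_length_hom_comp[OF A A _ \<psi>])
qed

lemma funpow_comp_Suc: "(g \<circ> f) ^^ Suc n = g \<circ> (f \<circ> g) ^^ n \<circ> f"
proof -
  have "((g \<circ> f) ^^ n) (g y) = g (((f \<circ> g) ^^ n) y)" for y by (induction n) auto
  then show ?thesis by (simp add: funpow_Suc_right fun_eq_iff del: funpow.simps)
qed

lemma hom_length_funpow_comp_le:
  assumes R: "noeth_local_ring R" and S: "noeth_local_ring S"
    and f: "finite_length_hom R S f" and g: "finite_length_hom S R g"
  shows "hom_length R R ((g \<circ> f) ^^ n)
    \<le> hom_length R S f * hom_length S S ((f \<circ> g) ^^ n) * hom_length S R g"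
proof -
  have cring: "cring R" "cring S" using R S by (simp_all add: noeth_local_ring_def local_ring_def)
  have gf: "finite_length_hom R R (g \<circ> f)" and fg: "finite_length_hom S S (f \<circ> g)"
    using finite_length_hom_comp[OF S R f g] finite_length_hom_comp[OF R S g f] .
  have fgf: "finite_length_hom R S ((f \<circ> g) ^^ n \<circ> f)"
    using finite_length_hom_comp[OF S S f finite_length_hom_funpow[OF S fg]] .
  have "hom_length R R ((g \<circ> f) ^^ n) \<le> hom_length R R ((g \<circ> f) ^^ n \<circ> (g \<circ> f))"
    using finite_length_hom_funpow[OF R gf, of n] gf
    by (intro hom_length_comp_ge[OF R cring(1)]) (auto simp: finite_length_hom_def)
  also have "\<dots> = hom_length R R (g \<circ> ((f \<circ> g) ^^ n \<circ> f))"
    by (simp only: funpow_Suc_right[symmetric] funpow_comp_Suc comp_assoc)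
  also have "\<dots> \<le> hom_length R S ((f \<circ> g) ^^ n \<circ> f) * hom_length S R g"
    using g by (intro hom_length_comp_le[OF S cring(1) fgf]) (simp add: finite_length_hom_def)
  also have "\<dots> \<le> hom_length R S f * hom_length S S ((f \<circ> g) ^^ n) * hom_length S R g"
    using finite_length_hom_funpow[OF S fg, of n]
    by (intro mult_right_mono hom_length_comp_le[OF S cring(2) f]) (auto simp: finite_length_hom_def)
  finally show ?thesis .
qed

lemma the_enat_hom_length_pos:
  assumes B: "noeth_local_ring B" and u: "finite_length_hom A B u"
  shows "0 < the_enat (hom_length A B u)"
proof -
  obtain n where n: "hom_length A B u = enat n" using finite_length_hom_finite[OF B u] by auto
  have "1 \<le> hom_length A B u" using u by (intro one_le_hom_length[OF B]) (simp add: finite_length_hom_def)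
  then show ?thesis using n by (simp add: one_enat_def)
qed

lemma the_enat_le_mult:
  assumes "x \<le> enat c * y" "y \<noteq> \<infinity>"
  shows "real (the_enat x) \<le> real c * real (the_enat y)"
  using assms by (cases x; cases y) (auto simp flip: of_nat_mult)

lemma the_enat_hom_length_funpow_comp_le:
  assumes R: "noeth_local_ring R" and S: "noeth_local_ring S"
    and f: "finite_length_hom R S f" and g: "finite_length_hom S R g"
  shows "real (the_enat (hom_length R R ((g \<circ> f) ^^ n)))
    \<le> real (the_enat (hom_length R S f) * the_enat (hom_length S R g))
      * real (the_enat (hom_length S S ((f \<circ> g) ^^ n)))"
proof -
  obtain p q where p: "hom_length R S f = enat p" and q: "hom_length S R g = enat q"
    using finite_length_hom_finite[OF S f] finite_length_hom_finite[OF R g] by auto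
  have "hom_length R R ((g \<circ> f) ^^ n) \<le> enat (p * q) * hom_length S S ((f \<circ> g) ^^ n)"
    using hom_length_funpow_comp_le[OF R S f g, of n] p q by (simp add: mult_ac flip: times_enat_simps(1))
  moreover have "hom_length S S ((f \<circ> g) ^^ n) \<noteq> \<infinity>"
    using finite_length_hom_finite[OF S finite_length_hom_funpow[OF S finite_length_hom_comp[OF R S g f]]]
    by simp
  ultimately have "real (the_enat (hom_length R R ((g \<circ> f) ^^ n)))
      \<le> real (p * q) * real (the_enat (hom_length S S ((f \<circ> g) ^^ n)))"
    by (rule the_enat_le_mult)
  then show ?thesis using p q by simp
qed

text \<open>No convergence is assumed: the two sequences converge to the same limits, if any.\<close>
lemma lim_ln_div_eq:
  fixes a b :: "nat \<Rightarrow> real"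
  assumes a: "\<And>n. 0 < a n" and b: "\<And>n. 0 < b n"
    and ab: "\<And>n. a n \<le> c * b n" and ba: "\<And>n. b n \<le> c * a n"
  shows "lim (\<lambda>n. ln (a n) / n) = lim (\<lambda>n. ln (b n) / n)"
proof -
  have "0 < c * b 0" using a[of 0] ab[of 0] by linarith
  then have c: "0 < c" using b[of 0] by (simp add: zero_less_mult_iff)
  have gap: "\<bar>ln (a n) - ln (b n)\<bar> \<le> ln c" for n
  proof -
    have "ln (a n) \<le> ln (c * b n)" "ln (b n) \<le> ln (c * a n)"
      using ab[of n] ba[of n] a[of n] b[of n] c by simp_all
    moreover have "ln (c * b n) = ln c + ln (b n)" "ln (c * a n) = ln c + ln (a n)"
      using a[of n] b[of n] c by (simp_all add: ln_mult)
    ultimately show ?thesis by linarith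
  qed
  have "norm (ln (a n) / n - ln (b n) / n) \<le> norm (1 / real n) * ln c" for n
  proof -
    have "norm (ln (a n) / n - ln (b n) / n) = \<bar>ln (a n) - ln (b n)\<bar> / n"
      by (simp add: diff_divide_distrib[symmetric] abs_divide)
    also have "\<dots> \<le> ln c / n" using gap[of n] by (rule divide_right_mono) simp
    finally show ?thesis by simp
  qed
  then have diff: "(\<lambda>n. ln (a n) / n - ln (b n) / n) \<longlonglongrightarrow> 0"
    by (intro tendsto_0_le[where K = "ln c", OF lim_1_over_n[where 'a = real] always_eventually] allI) simp
  have "(\<lambda>n. ln (a n) / n) \<longlonglongrightarrow> L \<longleftrightarrow> (\<lambda>n. ln (b n) / n) \<longlonglongrightarrow> L" for L
  proof
    assume "(\<lambda>n. ln (a n) / n) \<longlonglongrightarrow> L"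
    from tendsto_diff[OF this diff] show "(\<lambda>n. ln (b n) / n) \<longlonglongrightarrow> L" by simp
  next
    assume "(\<lambda>n. ln (b n) / n) \<longlonglongrightarrow> L"
    from tendsto_add[OF this diff] show "(\<lambda>n. ln (a n) / n) \<longlonglongrightarrow> L" by simp
  qed
  then show ?thesis unfolding lim_def by simp
qed

theorem mainTheorem12:
  fixes R :: "('a, 'm) ring_scheme" and S :: "('b, 'n) ring_scheme"
    and f :: "'a \<Rightarrow> 'b" and g :: "'b \<Rightarrow> 'a"
  assumes "noeth_local_ring R" and "noeth_local_ring S"
    and "finite_length_hom R S f" and "finite_length_hom S R g"
  shows "finite_length_hom R R (g \<circ> f) \<and> finite_length_hom S S (f \<circ> g) \<and>
         h_alg R (g \<circ> f) = h_alg S (f \<circ> g)"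
proof -
  note R = assms(1) and S = assms(2) and f = assms(3) and g = assms(4)
  have gf: "finite_length_hom R R (g \<circ> f)" using finite_length_hom_comp[OF S R f g] .
  have fg: "finite_length_hom S S (f \<circ> g)" using finite_length_hom_comp[OF R S g f] .
  define a where "a n = real (the_enat (hom_length R R ((g \<circ> f) ^^ n)))" for n
  define b where "b n = real (the_enat (hom_length S S ((f \<circ> g) ^^ n)))" for n
  define c where "c = real (the_enat (hom_length R S f) * the_enat (hom_length S R g))"
  have "a n \<le> c * b n" "b n \<le> c * a n" for n
    unfolding a_def b_def c_def
    using the_enat_hom_length_funpow_comp_le[OF R S f g] the_enat_hom_length_funpow_comp_le[OF S R g f]
    by (simp_all add: mult.commute)
  moreover have "0 < a n" "0 < b n" for n
    unfolding a_def b_def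
    using the_enat_hom_length_pos[OF R finite_length_hom_funpow[OF R gf]]
      the_enat_hom_length_pos[OF S finite_length_hom_funpow[OF S fg]] by auto
  ultimately have "lim (\<lambda>n. ln (a n) / n) = lim (\<lambda>n. ln (b n) / n)" by (intro lim_ln_div_eq)
  then show ?thesis using gf fg unfolding h_alg_def a_def b_def by simp
qed

end
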